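(* Let $K$ be an algebraically closed field, $R=K[x_1,\dots,x_N]$, and let $P$ be a finite set of monomials of $R$. Suppose $P_0,\dots,P_r\subseteq P$ satisfy: (i) $\bigcup_{i=0}^r P_i=P$; (ii) $P_0$ has exactly one element; (iii) for every $i$ with $0<i\le r$ and any two distinct $p,p''\in P_i$, there exist $i'$ with $0\le i'<i$ and $p'\in P_{i'}$ such that $p'$ divides $pp''$. Then $G=P$ and $S_i=P_i$ ($i=0,\dots,r$) satisfy hypotheses (i)–(iii) of the following statement: (i) $\bigcup S_i=G$; (ii) $|S_0|=1$; (iii) the recursive procedure — 0. set $T=S_0$; 1. pick an indeterminate $z$ dividing the only element of $T$; 2. remove all monomials divisible by $z$ from every $S_i$ and from $G$; 3. if no element of $G$ is left, end, otherwise pick $j$ such that exactly one element is left in $S_j$ and set $T$ to the current $S_j$; 4. go to 1 — can always be performed and always terminates, regardless of the choices of $z$ and $j$.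
   Context: Monomials are products of indeterminates (with coefficient 1). "Can always be performed" means that whenever monomials of $G$ remain after step 2, some $S_j$ has exactly one remaining element. *)

theory Defs
  imports Main
begin

text \<open>Monomials in the indeterminates indexed by a finite type 'v (the N indeterminates
  x_1,...,x_N) are represented by their exponent vectors  'v => nat.\<close>

type_synonym 'v monomial = "'v \<Rightarrow> nat"

definition mmult :: "'v monomial \<Rightarrow> 'v monomial \<Rightarrow> 'v monomial" where
  "mmult a b = (\<lambda>v. a v + b v)"

definition mdvd :: "'v monomial \<Rightarrow> 'v monomial \<Rightarrow> bool" where
  "mdvd a b \<longleftrightarrow> (\<forall>v. a v \<le> b v)"

definition indet :: "'v \<Rightarrow> 'v monomial" where
  "indet z = (\<lambda>v. if v = z then 1 else 0)"

definition remove_div :: "'v \<Rightarrow> 'v monomial set \<Rightarrow> 'v monomial set" where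
  "remove_div z A = {p \<in> A. \<not> mdvd (indet z) p}"

text \<open>States of the procedure: (S, G, T) with S the family S_0,...,S_r (indices > r unused),
  G the current set G, and T the current set T.\<close>
definition proc_step :: "nat \<Rightarrow>
   ((nat \<Rightarrow> 'v monomial set) \<times> 'v monomial set \<times> 'v monomial set) rel" where
  "proc_step r = {((S, G, T), (S', G', T')). \<exists>t z j.
      T = {t} \<and> mdvd (indet z) t \<and>
      S' = (\<lambda>i. remove_div z (S i)) \<and> G' = remove_div z G \<and>
      G' \<noteq> {} \<and> j \<le> r \<and> card (S' j) = 1 \<and> T' = S' j}"

text \<open>Reachable states (at the start of step 1), starting from step 0: T = S_0.\<close>
definition proc_reachable :: "nat \<Rightarrow> (nat \<Rightarrow> 'v monomial set) \<Rightarrow> 'v monomial set \<Rightarrow>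
   ((nat \<Rightarrow> 'v monomial set) \<times> 'v monomial set \<times> 'v monomial set) set" where
  "proc_reachable r S G = {st. ((S, G, S 0), st) \<in> (proc_step r)\<^sup>*}"

text \<open>"Can always be performed": whenever monomials of G remain after step 2 (for any
  choice of z in step 1), some S_j (j <= r) has exactly one remaining element.\<close>
definition proc_can_be_performed :: "nat \<Rightarrow> (nat \<Rightarrow> 'v monomial set) \<Rightarrow> 'v monomial set \<Rightarrow> bool" where
  "proc_can_be_performed r S G \<longleftrightarrow>
     (\<forall>S1 G1 T1 t z. (S1, G1, T1) \<in> proc_reachable r S G \<longrightarrow> T1 = {t} \<longrightarrow>
        mdvd (indet z) t \<longrightarrow> remove_div z G1 \<noteq> {} \<longrightarrow>
        (\<exists>j\<le>r. card (remove_div z (S1 j)) = 1))"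

text \<open>"Always terminates regardless of the choices": there is no infinite run.\<close>
definition proc_terminates :: "nat \<Rightarrow> (nat \<Rightarrow> 'v monomial set) \<Rightarrow> 'v monomial set \<Rightarrow> bool" where
  "proc_terminates r S G \<longleftrightarrow>
     \<not> (\<exists>f. f 0 = (S, G, S 0) \<and> (\<forall>n. (f n, f (Suc n)) \<in> proc_step r))"

end

theory Submission
  imports Defs
begin

text \<open>Once the indeterminates of a set Z have been used in step 1, what is left of every S_i
  and of G are exactly the monomials of P_i resp. P in which no variable of Z occurs.
  The least index i with a survivor in S_i has exactly one: two distinct survivors a, b
  would force a divisor of ab, hence another survivor, in some earlier S_i'.
  Every round deletes the only element of T, which lies in G, so G shrinks strictly and
  the procedure terminates.\<close>

definition avoiding :: "'v set \<Rightarrow> 'v monomial set \<Rightarrow> 'v monomial set" where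
  "avoiding Z A = {p \<in> A. \<forall>v\<in>Z. p v = 0}"

definition products_divided_earlier :: "nat \<Rightarrow> (nat \<Rightarrow> 'v monomial set) \<Rightarrow> bool" where
  "products_divided_earlier r Ps \<longleftrightarrow>
     (\<forall>i. 0 < i \<and> i \<le> r \<longrightarrow> (\<forall>p\<in>Ps i. \<forall>p''\<in>Ps i. p \<noteq> p'' \<longrightarrow>
        (\<exists>i'<i. \<exists>p'\<in>Ps i'. mdvd p' (mmult p p''))))"

lemma mdvd_indet_iff: "mdvd (indet z) p \<longleftrightarrow> p z \<noteq> 0"
  by (auto simp: mdvd_def indet_def dest: spec[of _ z])

lemma avoiding_empty [simp]: "avoiding {} A = A"
  by (simp add: avoiding_def)

lemma avoiding_mono: "A \<subseteq> B \<Longrightarrow> avoiding Z A \<subseteq> avoiding Z B"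
  by (auto simp: avoiding_def)

lemma remove_div_avoiding: "remove_div z (avoiding Z A) = avoiding (insert z Z) A"
  by (auto simp: remove_div_def avoiding_def mdvd_indet_iff)

lemma mdvd_mmult_avoiding:
  assumes "mdvd p (mmult a b)" and "a \<in> avoiding Z A" and "b \<in> avoiding Z B" and "p \<in> C"
  shows "p \<in> avoiding Z C"
proof -
  have "p v = 0" if "v \<in> Z" for v
  proof -
    have "p v \<le> a v + b v"
      using assms(1) by (simp add: mdvd_def mmult_def)
    moreover have "a v = 0" "b v = 0"
      using assms(2,3) that by (auto simp: avoiding_def)
    ultimately show ?thesis
      by simp
  qed
  with assms(4) show ?thesis
    by (simp add: avoiding_def)
qed

lemma avoiding_at_most_one_at_least_index:
  assumes earlier: "products_divided_earlier r Ps" and "card (Ps 0) = 1" and "i \<le> r"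
    and none_before: "\<And>k. k < i \<Longrightarrow> avoiding Z (Ps k) = {}"
    and a: "a \<in> avoiding Z (Ps i)" and b: "b \<in> avoiding Z (Ps i)"
  shows "a = b"
proof (cases "i = 0")
  case True
  then show ?thesis
    using \<open>card (Ps 0) = 1\<close> a b by (auto simp: card_1_singleton_iff avoiding_def)
next
  case False
  show ?thesis
  proof (rule ccontr)
    assume "a \<noteq> b"
    moreover have "a \<in> Ps i" "b \<in> Ps i"
      using a b by (auto simp: avoiding_def)
    ultimately obtain i' p' where "i' < i" "p' \<in> Ps i'" "mdvd p' (mmult a b)"
      using earlier False \<open>i \<le> r\<close> unfolding products_divided_earlier_def by blast
    then have "p' \<in> avoiding Z (Ps i')"
      using a b by (blast intro: mdvd_mmult_avoiding)
    with none_before \<open>i' < i\<close> show False by blast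
  qed
qed

lemma exists_singleton_avoiding:
  assumes "P \<subseteq> (\<Union>i\<le>r. Ps i)" and "card (Ps 0) = 1"
    and "products_divided_earlier r Ps" and "avoiding Z P \<noteq> {}"
  shows "\<exists>j\<le>r. card (avoiding Z (Ps j)) = 1"
proof -
  define nonempty where "nonempty i \<longleftrightarrow> i \<le> r \<and> avoiding Z (Ps i) \<noteq> {}" for i
  have "\<exists>i. nonempty i"
    using assms(1,4) by (fastforce simp: nonempty_def avoiding_def)
  define i where "i = (LEAST i. nonempty i)"
  have "nonempty i"
    unfolding i_def using \<open>\<exists>i. nonempty i\<close> by (rule LeastI_ex)
  then obtain a where "i \<le> r" and a: "a \<in> avoiding Z (Ps i)"
    by (auto simp: nonempty_def)
  have "avoiding Z (Ps k) = {}" if "k < i" for k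
    using not_less_Least[of k nonempty] that \<open>i \<le> r\<close> by (simp add: i_def nonempty_def)
  with avoiding_at_most_one_at_least_index[OF assms(3,2) \<open>i \<le> r\<close>] a
  have "avoiding Z (Ps i) = {a}"
    by blast
  with \<open>i \<le> r\<close> show ?thesis
    by auto
qed

lemma proc_reachable_avoiding:
  assumes "st \<in> proc_reachable r Ps P"
  shows "\<exists>Z. \<exists>j\<le>r. st = (\<lambda>i. avoiding Z (Ps i), avoiding Z P, avoiding Z (Ps j))"
  using assms unfolding proc_reachable_def mem_Collect_eq
proof (induction rule: rtrancl_induct)
  case base
  show ?case
    by (rule exI[of _ "{}"]) auto
next
  case (step st st')
  then obtain Z where "st = (\<lambda>i. avoiding Z (Ps i), avoiding Z P, snd (snd st))"
    by auto
  with step.hyps(2) obtain z j where "j \<le> r"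
    and "st' = (\<lambda>i. remove_div z (avoiding Z (Ps i)), remove_div z (avoiding Z P),
                remove_div z (avoiding Z (Ps j)))"
    unfolding proc_step_def by auto
  then show ?case
    unfolding remove_div_avoiding by blast
qed

lemma proc_step_shrinks_G:
  assumes "((S, G, T), (S', G', T')) \<in> proc_step r" and "T \<subseteq> G"
  shows "G' \<subset> G"
proof -
  from assms(1) obtain t z where "T = {t}" "mdvd (indet z) t" "G' = remove_div z G"
    unfolding proc_step_def by blast
  with assms(2) have "t \<in> G - G'" and "G' \<subseteq> G"
    by (auto simp: remove_div_def)
  then show ?thesis
    by blast
qed

lemma rtrancl_of_run:
  assumes "f 0 = st0" and "\<And>n. (f n, f (Suc n)) \<in> R"
  shows "(st0, f n) \<in> R\<^sup>*"
  by (induction n) (use assms in \<open>auto intro: rtrancl_into_rtrancl\<close>)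

lemma proc_can_be_performed_if_products_divided_earlier:
  assumes "P \<subseteq> (\<Union>i\<le>r. Ps i)" and "card (Ps 0) = 1" and "products_divided_earlier r Ps"
  shows "proc_can_be_performed r Ps P"
  unfolding proc_can_be_performed_def
proof (intro allI impI)
  fix S G T t z
  assume "(S, G, T) \<in> proc_reachable r Ps P" and "remove_div z G \<noteq> {}"
  moreover obtain Z where "S = (\<lambda>i. avoiding Z (Ps i))" "G = avoiding Z P"
    using proc_reachable_avoiding[OF calculation(1)] by blast
  ultimately show "\<exists>j\<le>r. card (remove_div z (S j)) = 1"
    using exists_singleton_avoiding[OF assms, of "insert z Z"] by (simp add: remove_div_avoiding)
qed

lemma proc_terminates_if_finite:
  assumes "finite P" and "\<forall>i\<le>r. Ps i \<subseteq> P"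
  shows "proc_terminates r Ps P"
  unfolding proc_terminates_def
proof
  assume "\<exists>f. f 0 = (Ps, P, Ps 0) \<and> (\<forall>n. (f n, f (Suc n)) \<in> proc_step r)"
  then obtain f where f0: "f 0 = (Ps, P, Ps 0)" and run: "\<And>n. (f n, f (Suc n)) \<in> proc_step r"
    by blast
  have "(fst (snd (f (Suc n))), fst (snd (f n))) \<in> finite_psubset" for n
  proof -
    have "f n \<in> proc_reachable r Ps P"
      unfolding proc_reachable_def using rtrancl_of_run[OF f0 run] by simp
    then obtain Z j where "j \<le> r"
      and fn: "f n = (\<lambda>i. avoiding Z (Ps i), avoiding Z P, avoiding Z (Ps j))"
      by (auto dest: proc_reachable_avoiding)
    have T_sub_G: "avoiding Z (Ps j) \<subseteq> avoiding Z P"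
      using assms(2) \<open>j \<le> r\<close> by (simp add: avoiding_mono)
    obtain S' G' T' where f_Suc: "f (Suc n) = (S', G', T')"
      by (cases "f (Suc n)")
    have "G' \<subset> avoiding Z P"
      using run[of n] T_sub_G unfolding fn f_Suc by (rule proc_step_shrinks_G)
    moreover have "finite (avoiding Z P)"
      using assms(1) by (simp add: avoiding_def)
    ultimately show ?thesis
      by (simp add: finite_psubset_def fn f_Suc)
  qed
  then show False
    using wf_no_infinite_down_chainE[OF wf_finite_psubset, of "\<lambda>n. fst (snd (f n))"] by blast
qed

theorem mainTheorem3:
  fixes P :: "('v::finite) monomial set" and Ps :: "nat \<Rightarrow> 'v monomial set" and r :: nat
  assumes "finite P"
    and "\<forall>i\<le>r. Ps i \<subseteq> P"
    and "(\<Union>i\<le>r. Ps i) = P"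
    and "card (Ps 0) = 1"
    and "\<forall>i. 0 < i \<and> i \<le> r \<longrightarrow> (\<forall>p\<in>Ps i. \<forall>p''\<in>Ps i. p \<noteq> p'' \<longrightarrow>
           (\<exists>i'<i. \<exists>p'\<in>Ps i'. mdvd p' (mmult p p'')))"
  shows "(\<Union>i\<le>r. Ps i) = P \<and> card (Ps 0) = 1 \<and>
         proc_can_be_performed r Ps P \<and> proc_terminates r Ps P"
proof -
  have "products_divided_earlier r Ps"
    using assms(5) by (simp add: products_divided_earlier_def)
  then have "proc_can_be_performed r Ps P"
    using assms(3,4) by (simp add: proc_can_be_performed_if_products_divided_earlier)
  moreover have "proc_terminates r Ps P"
    using assms(1,2) by (rule proc_terminates_if_finite)
  ultimately show ?thesis
    using assms(3,4) by blast
qed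

end
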